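(* Let $\rho_{\mathrm W}=\frac{1-\eta}{4}\mathbb{1}\otimes\mathbb{1}+\eta|\psi^-\rangle\langle\psi^-|$ be the two-qubit Werner state, where $|\psi^-\rangle=\frac{1}{\sqrt2}(|01\rangle-|10\rangle)$ and $\eta\in[0,1]$. Suppose the assemblage generated on Bob's side by all of Alice's projective measurements of observables $\cos\theta\,\sigma_x+\sin\theta\,\sigma_y$, $\theta\in[0,\pi)$, admits a local hidden state model. Then $\eta\le 2/\pi$.
   Context: A local hidden state model for an assemblage $\{\sigma_{i|X}\}$ means that there exist: - a probability distribution $\{\kappa_\lambda\}$, - response distributions $p^{(\lambda)}_i(x)$, - qubit density matrices $\rho^{(\lambda)}$, such that $\sigma_{i|X}=\sum_\lambda\kappa_\lambda p^{(\lambda)}_i(x)\rho^{(\lambda)}$ for every measurement $X$ in the given set and every outcome $i$. The assemblage is defined by $\sigma_{i|X}=\mathrm{Tr}_A[(\Pi^X_i\otimes\mathbb{1})\rho_{\mathrm W}]$, where $\Pi^X_i$ are the eigenprojectors of the observable $X$. *)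

theory Defs
  imports "HOL-Probability.Probability"
begin

text \<open>Qubit: computational basis indexed by bool (False = |0>, True = |1>).
  Two qubits (A,B): index type bool \<times> bool, first component = Alice.\<close>

type_synonym qmat = "complex^bool^bool"
type_synonym qqmat = "complex^(bool\<times>bool)^(bool\<times>bool)"

definition adjoint :: "complex^'n^'n \<Rightarrow> complex^'n^'n" where
  "adjoint M = (\<chi> i j. cnj (M $ j $ i))"

definition hermitian :: "complex^'n^'n \<Rightarrow> bool" where
  "hermitian M \<longleftrightarrow> adjoint M = M"

definition mtrace :: "complex^'n^'n \<Rightarrow> complex" where
  "mtrace M = (\<Sum>i\<in>UNIV. M $ i $ i)"

definition psd :: "complex^'n^'n \<Rightarrow> bool" where
  "psd M \<longleftrightarrow> hermitian M \<and>
     (\<forall>v::complex^'n. 0 \<le> Re (\<Sum>i\<in>UNIV. \<Sum>j\<in>UNIV. cnj (v $ i) * M $ i $ j * v $ j))"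

definition density_matrix :: "complex^'n^'n \<Rightarrow> bool" where
  "density_matrix M \<longleftrightarrow> psd M \<and> mtrace M = 1"

definition is_eigenprojector :: "complex^'n^'n \<Rightarrow> real \<Rightarrow> complex^'n^'n \<Rightarrow> bool" where
  "is_eigenprojector X e P \<longleftrightarrow> hermitian P \<and> P ** P = P \<and>
     range (\<lambda>v. P *v v) = {v. X *v v = complex_of_real e *s v}"

definition pauli_x :: qmat where
  "pauli_x = (\<chi> i j. if i \<noteq> j then 1 else 0)"

definition pauli_y :: qmat where
  "pauli_y = (\<chi> i j. if i = j then 0 else if j then - \<i> else \<i>)"

definition obs :: "real \<Rightarrow> qmat" where
  "obs \<theta> = (\<chi> i j. complex_of_real (cos \<theta>) * pauli_x $ i $ j
                   + complex_of_real (sin \<theta>) * pauli_y $ i $ j)"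

definition psi_minus :: "complex^(bool\<times>bool)" where
  "psi_minus = (\<chi> x. if fst x = snd x then 0
                else if snd x then complex_of_real (1 / sqrt 2) else - complex_of_real (1 / sqrt 2))"

definition werner :: "real \<Rightarrow> qqmat" where
  "werner \<eta> = (\<chi> x y. complex_of_real ((1 - \<eta>) / 4) * (if x = y then 1 else 0)
                 + complex_of_real \<eta> * (psi_minus $ x * cnj (psi_minus $ y)))"

definition tensor :: "qmat \<Rightarrow> qmat \<Rightarrow> qqmat" where
  "tensor A B = (\<chi> x y. A $ fst x $ fst y * B $ snd x $ snd y)"

definition ptrace_A :: "qqmat \<Rightarrow> qmat" where
  "ptrace_A M = (\<chi> b b'. \<Sum>a\<in>UNIV. M $ (a,b) $ (a,b'))"

definition assemblage :: "real \<Rightarrow> qmat \<Rightarrow> qmat" where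
  "assemblage \<eta> P = ptrace_A (tensor P (mat 1) ** werner \<eta>)"

end

theory Submission
  imports Defs "HOL-Real_Asymp.Real_Asymp"
begin

(*
  For the observable at angle \<theta> the eigenprojectors are (1 \<plusminus> obs \<theta>)/2, so the off-diagonal
  entry of Bob's conditional state for outcome e is -\<eta> e cis(-\<theta>)/4. In a local hidden state
  model the same entry is the average of p(e|\<theta>,\<lambda>) z\<^sub>\<lambda>, where z\<^sub>\<lambda> is the off-diagonal entry of
  \<rho>\<^sub>\<lambda> and |z\<^sub>\<lambda>| \<le> 1/2. Subtracting the two outcomes and rotating by cis \<theta> gives
  \<eta>/2 \<le> E |Re (z\<^sub>\<lambda> cis \<theta>)| for every \<theta>. Summing over the N angles j\<pi>/N and bounding
  \<Sum>\<^sub>j |Re (w cis (j\<pi>/N))| \<le> |w| / sin (\<pi>/2N) by a telescoping argument gives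
  \<eta> \<le> 1 / (N sin (\<pi>/2N)), which tends to 2/\<pi>.
*)

lemma Re_mult_cis_stays_negative:
  fixes z :: complex
  assumes "0 \<le> Re z" "0 \<le> s" "s < t" "t < pi" and neg: "Re (z * cis s) < 0"
  shows "Re (z * cis t) < 0"
proof -
  have "s \<noteq> 0" using assms(1) neg by auto
  then have sin_s: "sin s > 0" using assms by (intro sin_gt_zero) auto
  have "sin t > 0" using assms by (intro sin_gt_zero) auto
  moreover have "sin (t - s) \<ge> 0" using assms by (intro sin_ge_zero) auto
  moreover have "Re (z * cis s) * sin t - Re (z * cis t) * sin s = Re z * sin (t - s)"
    by (simp add: sin_diff algebra_simps)
  ultimately have "Re (z * cis t) * sin s < 0"
    using assms(1) neg by (smt (verit) mult_neg_pos mult_nonneg_nonneg)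
  with sin_s show ?thesis by (simp add: mult_less_0_iff)
qed

lemma sum_abs_eq_if_sign_changes_once:
  fixes f :: "nat \<Rightarrow> real"
  assumes "\<And>j k. j < k \<Longrightarrow> k < N \<Longrightarrow> f j < 0 \<Longrightarrow> f k < 0"
  obtains m where "m \<le> N" "(\<Sum>j<N. \<bar>f j\<bar>) = (\<Sum>j<m. f j) - (\<Sum>j=m..<N. f j)"
proof -
  define m where "m = (if \<exists>j<N. f j < 0 then LEAST j. j < N \<and> f j < 0 else N)"
  have "m \<le> N" and nonneg: "\<And>j. j < m \<Longrightarrow> 0 \<le> f j"
    and nonpos: "\<And>j. m \<le> j \<Longrightarrow> j < N \<Longrightarrow> f j \<le> 0"
  proof -
    show "m \<le> N"
      unfolding m_def by (auto intro: order.trans[OF Least_le] less_imp_le)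
    show "0 \<le> f j" if "j < m" for j
    proof (rule ccontr)
      assume "\<not> 0 \<le> f j"
      then have "j < N \<and> f j < 0" using that \<open>m \<le> N\<close> by auto
      then show False using that unfolding m_def by (auto dest: not_less_Least split: if_splits)
    qed
    fix j assume j: "m \<le> j" "j < N"
    then have "\<exists>j<N. f j < 0" by (auto simp: m_def split: if_splits)
    then have "m < N \<and> f m < 0"
      unfolding m_def using LeastI_ex[of "\<lambda>j. j < N \<and> f j < 0"] by auto
    then show "f j \<le> 0" using assms[of m j] j by (cases "j = m") auto
  qed
  have "(\<Sum>j<N. \<bar>f j\<bar>) = (\<Sum>j<m. \<bar>f j\<bar>) + (\<Sum>j=m..<N. \<bar>f j\<bar>)"
    using \<open>m \<le> N\<close> by (simp add: lessThan_atLeast0 sum.atLeastLessThan_concat)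
  also have "\<dots> = (\<Sum>j<m. f j) - (\<Sum>j=m..<N. f j)"
    using nonneg nonpos by (simp add: sum_negf[symmetric])
  finally show ?thesis using that \<open>m \<le> N\<close> by blast
qed

lemma sum_abs_Re_mult_cis_le_of_Re_nonneg:
  fixes z :: complex
  assumes "0 < N" "0 \<le> Re z"
  shows "(\<Sum>j<N. \<bar>Re (z * cis (real j * pi / N))\<bar>) \<le> cmod z / sin (pi / (2 * real N))"
proof -
  define \<delta> where "\<delta> = pi / N"
  define f where "f j = Re (z * cis (real j * \<delta>))" for j
  \<comment> \<open>since cis (\<delta>/2) - cis (-\<delta>/2) = 2i sin (\<delta>/2), the differences of G are the f j up to a factor\<close>
  define G where "G j = Im (z * cis (real j * \<delta> - \<delta> / 2))" for j
  have "0 < \<delta>" "real N * \<delta> = pi" using \<open>0 < N\<close> by (simp_all add: \<delta>_def)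
  have angle_lt_pi: "real j * \<delta> < pi" if "j < N" for j
    using \<open>0 < \<delta>\<close> \<open>real N * \<delta> = pi\<close> that by (metis mult_strict_right_mono of_nat_less_iff)
  have "\<delta> \<le> pi"
    using \<open>0 < N\<close> \<open>0 < \<delta>\<close> mult_right_mono[of 1 "real N" \<delta>] \<open>real N * \<delta> = pi\<close> by simp
  then have sin_pos: "sin (\<delta> / 2) > 0" using \<open>0 < \<delta>\<close> by (intro sin_gt_zero) auto
  have telescope: "2 * sin (\<delta> / 2) * f j = G (Suc j) - G j" for j
  proof -
    have "G (Suc j) - G j = Im (z * cis (real j * \<delta>) * (cis (\<delta> / 2) - cis (- \<delta> / 2)))"
      by (simp add: G_def algebra_simps cis_mult diff_divide_distrib add_divide_distrib)
    then show ?thesis by (simp add: f_def algebra_simps)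
  qed
  have "cis (real N * \<delta> - \<delta> / 2) = - cis (- \<delta> / 2)"
    using \<open>real N * \<delta> = pi\<close> by (simp add: minus_cis)
  then have G_ends: "G 0 + G N = 0" by (simp add: G_def)
  have "f k < 0" if "j < k" "k < N" "f j < 0" for j k
    using Re_mult_cis_stays_negative[OF \<open>0 \<le> Re z\<close>, of "real j * \<delta>" "real k * \<delta>"] that
      \<open>0 < \<delta>\<close> angle_lt_pi[of k] by (simp add: f_def)
  then obtain m where "m \<le> N" and abs_sum: "(\<Sum>j<N. \<bar>f j\<bar>) = (\<Sum>j<m. f j) - (\<Sum>j=m..<N. f j)"
    by (rule sum_abs_eq_if_sign_changes_once)
  have "G m \<le> cmod z"
    using abs_Im_le_cmod[of "z * cis (real m * \<delta> - \<delta> / 2)"] by (simp add: G_def norm_mult)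
  have "2 * sin (\<delta> / 2) * (\<Sum>j<N. \<bar>f j\<bar>)
      = (\<Sum>j<m. G (Suc j) - G j) - (\<Sum>j=m..<N. G (Suc j) - G j)"
    by (simp add: abs_sum right_diff_distrib sum_distrib_left telescope)
  also have "\<dots> = 2 * G m - (G 0 + G N)"
    using \<open>m \<le> N\<close> by (simp add: sum_lessThan_telescope sum_Suc_diff')
  also have "\<dots> \<le> 2 * cmod z" using G_ends \<open>G m \<le> cmod z\<close> by simp
  finally have "sin (\<delta> / 2) * (\<Sum>j<N. \<bar>f j\<bar>) \<le> cmod z" by simp
  with sin_pos show ?thesis by (simp add: f_def \<delta>_def field_simps)
qed

lemma sum_abs_Re_mult_cis_le:
  fixes z :: complex
  assumes "0 < N"
  shows "(\<Sum>j<N. \<bar>Re (z * cis (real j * pi / N))\<bar>) \<le> cmod z / sin (pi / (2 * real N))"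
proof (cases "0 \<le> Re z")
  case True
  with assms show ?thesis by (rule sum_abs_Re_mult_cis_le_of_Re_nonneg)
next
  case False
  then have "0 \<le> Re (- z)" by simp
  moreover have "\<bar>Re (- z * w)\<bar> = \<bar>Re (z * w)\<bar>" for w by simp
  ultimately show ?thesis
    using sum_abs_Re_mult_cis_le_of_Re_nonneg[OF assms, of "- z"] by (simp only: norm_minus_cancel)
qed

lemma tendsto_inverse_mult_sin_pi_div: "(\<lambda>N. 1 / (real N * sin (pi / (2 * real N)))) \<longlonglongrightarrow> 2 / pi"
  by real_asymp

lemma abs_Re_mult_cis_le: "\<bar>Re (z * cis \<theta>)\<bar> \<le> cmod z"
  using abs_Re_le_cmod[of "z * cis \<theta>"] by (simp add: norm_mult)

lemma integrable_measure_pmf_bounded: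
  fixes f :: "'l \<Rightarrow> 'b::{banach, second_countable_topology}"
  assumes "\<And>l. norm (f l) \<le> B"
  shows "integrable (measure_pmf \<kappa>) f"
  by (rule measure_pmf.integrable_const_bound[where B = B]) (auto simp: assms)

lemma le_expectation_abs_Re_cis:
  fixes \<kappa> :: "'l pmf" and p q :: "'l \<Rightarrow> real" and z :: "'l \<Rightarrow> complex"
  assumes nonneg: "\<And>l. 0 \<le> p l" "\<And>l. 0 \<le> q l" and total: "\<And>l. p l + q l = 1"
    and bounded: "\<And>l. cmod (z l) \<le> B"
    and Ep: "measure_pmf.expectation \<kappa> (\<lambda>l. of_real (p l) * z l) = - of_real c * cis (- \<theta>) / 2"
    and Eq: "measure_pmf.expectation \<kappa> (\<lambda>l. of_real (q l) * z l) = of_real c * cis (- \<theta>) / 2"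
  shows "c \<le> measure_pmf.expectation \<kappa> (\<lambda>l. \<bar>Re (z l * cis \<theta>)\<bar>)"
proof -
  have weights: "\<bar>p l\<bar> \<le> 1" "\<bar>q l\<bar> \<le> 1" "\<bar>q l - p l\<bar> \<le> 1" for l
    using nonneg[of l] total[of l] by auto
  have int_weighted: "integrable (measure_pmf \<kappa>) (\<lambda>l. of_real (r l) * z l)"
    if "r \<in> {p, q}" for r
  proof (rule integrable_measure_pmf_bounded)
    fix l
    have "\<bar>r l\<bar> * cmod (z l) \<le> cmod (z l)"
      using that weights[of l] by (intro mult_left_le_one_le) auto
    then show "norm (of_real (r l) * z l) \<le> B" using bounded[of l] by (simp add: norm_mult)
  qed
  have "measure_pmf.expectation \<kappa> (\<lambda>l. of_real (q l) * z l)
        - measure_pmf.expectation \<kappa> (\<lambda>l. of_real (p l) * z l) = of_real c * cis (- \<theta>)"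
    by (simp add: Ep Eq)
  then have "c = Re ((measure_pmf.expectation \<kappa> (\<lambda>l. of_real (q l) * z l)
                - measure_pmf.expectation \<kappa> (\<lambda>l. of_real (p l) * z l)) * cis \<theta>)"
    by (simp add: mult.assoc cis_mult)
  also have "\<dots> = Re (measure_pmf.expectation \<kappa> (\<lambda>l. of_real (q l - p l) * z l * cis \<theta>))"
    using int_weighted by (simp add: integral_diff integral_mult_left_zero algebra_simps)
  also have "\<dots> = measure_pmf.expectation \<kappa> (\<lambda>l. (q l - p l) * Re (z l * cis \<theta>))"
    using int_weighted by (subst integral_Re[symmetric]) (auto simp: algebra_simps)
  also have "\<dots> \<le> measure_pmf.expectation \<kappa> (\<lambda>l. \<bar>Re (z l * cis \<theta>)\<bar>)"
  proof (rule integral_mono)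
    have Re_bound: "\<bar>Re (z l * cis \<theta>)\<bar> \<le> B" for l
      using abs_Re_mult_cis_le bounded order_trans by blast
    have weighted_le: "\<bar>(q l - p l) * Re (z l * cis \<theta>)\<bar> \<le> \<bar>Re (z l * cis \<theta>)\<bar>" for l
      using weights(3)[of l] by (simp add: abs_mult mult_left_le_one_le)
    show "integrable (measure_pmf \<kappa>) (\<lambda>l. (q l - p l) * Re (z l * cis \<theta>))"
      "integrable (measure_pmf \<kappa>) (\<lambda>l. \<bar>Re (z l * cis \<theta>)\<bar>)"
      using order_trans[OF weighted_le Re_bound] Re_bound
      by (auto intro: integrable_measure_pmf_bounded[where B = B])
    show "(q l - p l) * Re (z l * cis \<theta>) \<le> \<bar>Re (z l * cis \<theta>)\<bar>" for l
      using weighted_le[of l] by linarith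
  qed
  finally show ?thesis .
qed

lemma lower_bound_expectation_abs_Re_cis_le:
  fixes \<kappa> :: "'l pmf" and z :: "'l \<Rightarrow> complex"
  assumes bounded: "\<And>l. cmod (z l) \<le> B"
    and lower: "\<And>\<theta>. \<theta> \<in> {0..<pi} \<Longrightarrow> c \<le> measure_pmf.expectation \<kappa> (\<lambda>l. \<bar>Re (z l * cis \<theta>)\<bar>)"
  shows "c \<le> 2 * B / pi"
proof -
  have integrable: "integrable (measure_pmf \<kappa>) (\<lambda>l. \<bar>Re (z l * cis \<theta>)\<bar>)" for \<theta>
    using abs_Re_mult_cis_le bounded
    by (intro integrable_measure_pmf_bounded[where B = B]) (auto intro: order_trans)
  have "c \<le> B * (1 / (real N * sin (pi / (2 * real N))))" if "0 < N" for N
  proof -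
    have sin_pos: "0 < sin (pi / (2 * real N))"
      using sin_pi_divide_n_gt_0[of "2 * N"] that by (simp add: mult.commute)
    have angles: "real j * pi / N \<in> {0..<pi}" if "j < N" for j
      using that by (simp add: field_simps)
    have "real N * c = (\<Sum>j<N. c)" by simp
    also have "\<dots> \<le> (\<Sum>j<N. measure_pmf.expectation \<kappa> (\<lambda>l. \<bar>Re (z l * cis (real j * pi / N))\<bar>))"
      using angles lower by (intro sum_mono) auto
    also have "\<dots> = measure_pmf.expectation \<kappa> (\<lambda>l. \<Sum>j<N. \<bar>Re (z l * cis (real j * pi / N))\<bar>)"
      using integrable by (simp add: integral_sum)
    also have "\<dots> \<le> measure_pmf.expectation \<kappa> (\<lambda>l. B / sin (pi / (2 * real N)))"
    proof (rule integral_mono)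
      show "(\<Sum>j<N. \<bar>Re (z l * cis (real j * pi / N))\<bar>) \<le> B / sin (pi / (2 * real N))" for l
        using sum_abs_Re_mult_cis_le[OF that, of "z l"] bounded[of l] sin_pos
        by (meson divide_right_mono less_imp_le order_trans)
    qed (use integrable in auto)
    finally have "real N * c \<le> B / sin (pi / (2 * real N))" by simp
    with that sin_pos show ?thesis by (simp add: field_simps)
  qed
  moreover have "(\<lambda>N. B * (1 / (real N * sin (pi / (2 * real N))))) \<longlonglongrightarrow> B * (2 / pi)"
    by (intro tendsto_mult_left tendsto_inverse_mult_sin_pi_div)
  ultimately have "c \<le> B * (2 / pi)"
    by (intro LIMSEQ_le_const[of _ "B * (2 / pi)"]) (auto intro: exI[of _ 1])
  then show ?thesis by (simp add: mult.commute)
qed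

lemma adjoint_matrix_mult: "adjoint (A ** B) = adjoint B ** adjoint (A :: complex^'n^'n)"
  by (simp add: adjoint_def matrix_matrix_mult_def vec_eq_iff mult.commute)

lemma eigenprojector_unique:
  fixes X P Q :: "complex^'n^'n"
  assumes P: "is_eigenprojector X e P" and "hermitian Q"
    and into_eigenspace: "\<And>v. X *v (Q *v v) = of_real e *s (Q *v v)"
    and fixes_eigenspace: "\<And>v. X *v v = of_real e *s v \<Longrightarrow> Q *v v = v"
  shows "P = Q"
proof -
  have "hermitian P" and "P ** P = P" and range_P: "range ((*v) P) = {v. X *v v = of_real e *s v}"
    using P by (auto simp: is_eigenprojector_def)
  have "P ** Q = Q"
  proof (subst matrix_eq, intro allI)
    fix v
    obtain w where w: "Q *v v = P *v w" using range_P into_eigenspace by blast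
    have "(P ** Q) *v v = (P ** P) *v w" by (simp flip: matrix_vector_mul_assoc add: w)
    with w \<open>P ** P = P\<close> show "(P ** Q) *v v = Q *v v" by simp
  qed
  moreover have "Q ** P = P"
  proof (subst matrix_eq, intro allI)
    fix v
    have "X *v (P *v v) = of_real e *s (P *v v)" using range_P by auto
    then show "(Q ** P) *v v = P *v v" by (simp flip: matrix_vector_mul_assoc add: fixes_eigenspace)
  qed
  ultimately have "adjoint P = P ** Q"
    using \<open>hermitian P\<close> \<open>hermitian Q\<close> by (metis adjoint_matrix_mult hermitian_def)
  with \<open>hermitian P\<close> \<open>P ** Q = Q\<close> show ?thesis by (simp add: hermitian_def)
qed

lemma obs_entries:
  "obs t $ False $ False = 0" "obs t $ True $ True = 0"
  "obs t $ False $ True = cis (- t)" "obs t $ True $ False = cis t"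
  by (simp_all add: obs_def pauli_x_def pauli_y_def complex_eq_iff)

definition obs_proj :: "real \<Rightarrow> real \<Rightarrow> qmat" where
  "obs_proj t e = (\<chi> i j. (mat 1 $ i $ j + of_real e * obs t $ i $ j) / 2)"

lemma eigenprojector_obs_eq_obs_proj:
  assumes "e \<in> {1, -1}" and "is_eigenprojector (obs t) e P"
  shows "P = obs_proj t e"
proof (rule eigenprojector_unique[OF assms(2)])
  show "hermitian (obs_proj t e)"
    by (simp add: hermitian_def adjoint_def obs_proj_def mat_def vec_eq_iff obs_entries all_bool_eq cis_cnj)
  show "obs t *v (obs_proj t e *v v) = of_real e *s (obs_proj t e *v v)" for v
    using assms(1)
    by (auto simp: obs_proj_def mat_def vec_eq_iff obs_entries UNIV_bool all_bool_eq
        matrix_vector_mult_def algebra_simps cis_mult)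
  show "obs_proj t e *v v = v" if "obs t *v v = of_real e *s v" for v
    using assms(1) that
    by (auto simp: obs_proj_def mat_def vec_eq_iff obs_entries UNIV_bool all_bool_eq
        matrix_vector_mult_def algebra_simps cis_mult)
qed

lemma eigenprojector_obs_off_diagonal:
  assumes "e \<in> {1, -1}" and "is_eigenprojector (obs t) e P"
  shows "P $ False $ True = of_real e * cis (- t) / 2"
  using eigenprojector_obs_eq_obs_proj[OF assms] by (simp add: obs_proj_def mat_def obs_entries)

lemma assemblage_off_diagonal:
  "assemblage \<eta> P $ False $ True = - of_real \<eta> / 2 * P $ False $ True"
proof -
  have UNIV_pairs: "(UNIV :: (bool \<times> bool) set) = {(False, False), (False, True), (True, False), (True, True)}"
    by (auto simp: UNIV_bool)
  have sqrt2: "complex_of_real (sqrt 2) * complex_of_real (sqrt 2) = 2"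
    by (simp flip: of_real_mult)
  show ?thesis
    by (simp add: assemblage_def ptrace_A_def tensor_def matrix_matrix_mult_def werner_def
        psi_minus_def UNIV_bool UNIV_pairs mat_def sqrt2)
qed

lemma density_matrix_off_diagonal_le:
  assumes "density_matrix (\<rho> :: qmat)"
  shows "cmod (\<rho> $ False $ True) \<le> 1 / 2"
proof -
  have "hermitian \<rho>" and psd: "\<And>v. 0 \<le> Re (\<Sum>i\<in>UNIV. \<Sum>j\<in>UNIV. cnj (v $ i) * \<rho> $ i $ j * v $ j)"
    and "mtrace \<rho> = 1"
    using assms by (auto simp: density_matrix_def psd_def)
  define z where "z = \<rho> $ False $ True"
  define d where "d = Re (\<rho> $ True $ True)"
  define n where "n = (Re z)\<^sup>2 + (Im z)\<^sup>2"
  have conj_sym: "cnj (\<rho> $ j $ i) = \<rho> $ i $ j" for i j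
  proof -
    have "adjoint \<rho> $ i $ j = \<rho> $ i $ j" using \<open>hermitian \<rho>\<close> by (simp add: hermitian_def)
    then show ?thesis by (simp add: adjoint_def)
  qed
  have TF: "\<rho> $ True $ False = cnj z"
    using conj_sym[of False True] unfolding z_def by (metis complex_cnj_cnj)
  have real_diagonal: "Im (\<rho> $ False $ False) = 0" "Im (\<rho> $ True $ True) = 0"
    using conj_sym[of False False] conj_sym[of True True] by (auto simp: complex_eq_iff)
  have FF: "Re (\<rho> $ False $ False) = 1 - d"
    using \<open>mtrace \<rho> = 1\<close> by (simp add: mtrace_def UNIV_bool d_def complex_eq_iff)
  have "0 \<le> d" using psd[of "\<chi> i. if i then 1 else 0"] by (simp add: UNIV_bool d_def)
  have quad: "0 \<le> (1 - d) * n - 2 * t * n + t\<^sup>2 * d" for t :: real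
    using psd[of "\<chi> i. if i then - of_real t else z"]
    by (simp add: UNIV_bool TF FF real_diagonal d_def n_def z_def[symmetric] power2_eq_square algebra_simps)
  have "(1 - d) * n - 2 * (1/2) * n + (1/2)\<^sup>2 * d = d * (1/4 - n)"
    by (simp add: algebra_simps power2_eq_square)
  then have "0 \<le> d * (1/4 - n)" using quad[of "1/2"] by simp
  moreover have "(1 - d) * n - 2 * 1 * n + 1\<^sup>2 * d = d - (1 + d) * n"
    by (simp add: algebra_simps)
  then have "0 \<le> d - (1 + d) * n" using quad[of 1] by simp
  moreover have "0 \<le> n" by (simp add: n_def)
  ultimately have "n \<le> 1/4" using \<open>0 \<le> d\<close>
    by (cases "d = 0") (auto simp: zero_le_mult_iff)
  then have "(cmod z)\<^sup>2 \<le> (1/2)\<^sup>2" by (simp add: n_def cmod_power2 power_divide)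
  then show ?thesis unfolding z_def by (rule power2_le_imp_le) simp
qed

theorem mainTheorem7:
  fixes \<eta> :: real
    and Pi :: "real \<Rightarrow> real \<Rightarrow> qmat"
  assumes "0 \<le> \<eta>" and "\<eta> \<le> 1"
    and "\<And>\<theta> i. \<theta> \<in> {0..<pi} \<Longrightarrow> i \<in> {1, -1} \<Longrightarrow> is_eigenprojector (obs \<theta>) i (Pi \<theta> i)"
    and "\<exists>(\<kappa> :: 'l pmf) (p :: 'l \<Rightarrow> real \<Rightarrow> real \<Rightarrow> real) (\<rho> :: 'l \<Rightarrow> qmat).
           (\<forall>l \<theta> i. 0 \<le> p l \<theta> i) \<and>
           (\<forall>l. \<forall>\<theta>\<in>{0..<pi}. p l \<theta> 1 + p l \<theta> (-1) = 1) \<and>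
           (\<forall>l. density_matrix (\<rho> l)) \<and>
           (\<forall>\<theta>\<in>{0..<pi}. \<forall>i\<in>{1, -1}.
              assemblage \<eta> (Pi \<theta> i) =
                (\<chi> r c. measure_pmf.expectation \<kappa>
                          (\<lambda>l. complex_of_real (p l \<theta> i) * \<rho> l $ r $ c)))"
  shows "\<eta> \<le> 2 / pi"
proof -
  obtain \<kappa> :: "'l pmf" and p :: "'l \<Rightarrow> real \<Rightarrow> real \<Rightarrow> real" and \<rho> :: "'l \<Rightarrow> qmat"
    where p_nonneg: "\<And>l \<theta> i. 0 \<le> p l \<theta> i"
      and p_total: "\<And>l \<theta>. \<theta> \<in> {0..<pi} \<Longrightarrow> p l \<theta> 1 + p l \<theta> (-1) = 1"
      and density: "\<And>l. density_matrix (\<rho> l)"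
      and model: "\<And>\<theta> i. \<theta> \<in> {0..<pi} \<Longrightarrow> i \<in> {1, -1} \<Longrightarrow> assemblage \<eta> (Pi \<theta> i) =
                (\<chi> r c. measure_pmf.expectation \<kappa> (\<lambda>l. complex_of_real (p l \<theta> i) * \<rho> l $ r $ c))"
    using assms(4) by blast
  define z where "z l = \<rho> l $ False $ True" for l
  have "cmod (z l) \<le> 1 / 2" for l
    unfolding z_def by (rule density_matrix_off_diagonal_le[OF density])
  moreover have "\<eta> / 2 \<le> measure_pmf.expectation \<kappa> (\<lambda>l. \<bar>Re (z l * cis \<theta>)\<bar>)"
    if \<theta>: "\<theta> \<in> {0..<pi}" for \<theta>
  proof (rule le_expectation_abs_Re_cis[where B = "1 / 2"])
    have "measure_pmf.expectation \<kappa> (\<lambda>l. of_real (p l \<theta> i) * z l) = - of_real \<eta> * of_real i * cis (- \<theta>) / 4"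
      if "i \<in> {1, -1}" for i
      using arg_cong[OF model[OF \<theta> that], of "\<lambda>M. M $ False $ True"]
        eigenprojector_obs_off_diagonal[OF that assms(3)[OF \<theta> that]]
      by (simp add: z_def assemblage_off_diagonal mult.assoc)
    then show "measure_pmf.expectation \<kappa> (\<lambda>l. of_real (p l \<theta> 1) * z l) = - of_real (\<eta> / 2) * cis (- \<theta>) / 2"
      "measure_pmf.expectation \<kappa> (\<lambda>l. of_real (p l \<theta> (-1)) * z l) = of_real (\<eta> / 2) * cis (- \<theta>) / 2"
      by simp_all
  qed (use p_nonneg p_total[OF \<theta>] \<open>\<And>l. cmod (z l) \<le> 1 / 2\<close> in auto)
  ultimately have "\<eta> / 2 \<le> 2 * (1 / 2) / pi"
    by (rule lower_bound_expectation_abs_Re_cis_le)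
  then show ?thesis by simp
qed

end
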